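(* Euler's constant $\gamma:=\lim_{n\to\infty}\left(1+\frac12+\cdots+\frac1n-\ln n\right)$ satisfies \[ \gamma=\int_0^\infty\sum_{k=2}^\infty\frac{1}{k^2\binom{t+k}{k}}\,dt . \]
   Context: The generalized binomial coefficient is $\binom{s}{t}:=\frac{\Gamma(s+1)}{\Gamma(t+1)\Gamma(s-t+1)}$. *)

theory Defs
  imports "HOL-Analysis.Analysis"
begin

definition gbinom :: "real \<Rightarrow> real \<Rightarrow> real" where
  "gbinom s t = Gamma (s + 1) / (Gamma (t + 1) * Gamma (s - t + 1))"

end

theory Submission
  imports Defs
begin

(* For x \<ge> 1 let R x = \<Sum>m. m! / ((m+1) * x(x+1)...(x+m)) be the
   inverse factorial series of the trigamma function.  A telescoping computation
   gives R x - R (x+1) = 1/x^2, and the crude bound x(x+1)...(x+m) \<ge> x (m+1)!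
   gives 0 \<le> R x = O(1/x); hence R x = \<Sum>n. 1/(x+n)^2 = \<psi>'(x).
   For t \<ge> 0 the k-th summand of the integrand equals the (k+1)-st term of
   R (t+1), so the integrand is \<psi>'(t+1) - 1/(t+1) \<ge> 0, the derivative of
   \<psi>(t+1) - ln(t+1).  Its integral over [0,N] is therefore
   \<psi>(N+1) - ln(N+1) - \<psi>(1) = H_N - ln(N+1), which tends to \<gamma>; monotone
   convergence for nonnegative integrands turns this into the integral over [0,\<infinity>). *)

lemma pochhammer_ge_mult_fact:
  fixes x :: real
  assumes "x \<ge> 1"
  shows "x * fact (Suc k) \<le> pochhammer x (Suc k)"
proof (induction k)
  case 0 then show ?case by simp
next
  case (Suc k)
  have "x * fact (Suc (Suc k)) = (x * fact (Suc k)) * (real k + 2)"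
    by (simp add: algebra_simps)
  also have "\<dots> \<le> pochhammer x (Suc k) * (x + real (Suc k))"
    using Suc assms pochhammer_pos[of x "Suc k"] by (intro mult_mono) auto
  also have "\<dots> = pochhammer x (Suc (Suc k))" by (simp add: pochhammer_Suc)
  finally show ?case .
qed

section \<open>The inverse factorial series of the trigamma function\<close>

definition trigamma_term :: "real \<Rightarrow> nat \<Rightarrow> real" where
  "trigamma_term x m = fact m / (real (Suc m) * pochhammer x (Suc m))"

definition trigamma_series :: "real \<Rightarrow> real" where
  "trigamma_series x = suminf (trigamma_term x)"

lemma trigamma_term_nonneg: "x > 0 \<Longrightarrow> 0 \<le> trigamma_term x m"
  unfolding trigamma_term_def using pochhammer_pos[of x "Suc m"] by simp

lemma trigamma_term_le:
  assumes "x \<ge> 1"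
  shows "trigamma_term x m \<le> 1 / x * (1 / (real (Suc m))\<^sup>2)"
proof -
  have "trigamma_term x m = fact (Suc m) / ((real (Suc m))\<^sup>2 * pochhammer x (Suc m))"
    unfolding trigamma_term_def by (simp add: power2_eq_square)
  also have "\<dots> \<le> fact (Suc m) / ((real (Suc m))\<^sup>2 * (x * fact (Suc m)))"
    using pochhammer_ge_mult_fact[OF assms, of m] pochhammer_pos[of x "Suc m"] assms
    by (intro divide_left_mono mult_left_mono mult_pos_pos) auto
  also have "\<dots> = 1 / x * (1 / (real (Suc m))\<^sup>2)" by simp
  finally show ?thesis .
qed

lemma summable_inverse_Suc_squared: "summable (\<lambda>m. 1 / (real (Suc m))\<^sup>2)"
proof -
  have "summable (\<lambda>m. inverse ((real m)\<^sup>2))" using inverse_power_summable[of 2] by simp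
  then show ?thesis by (subst (asm) summable_Suc_iff[symmetric]) (simp add: inverse_eq_divide)
qed

lemma summable_trigamma_term: "x \<ge> 1 \<Longrightarrow> summable (trigamma_term x)"
  by (rule summable_comparison_test'[where N=0,
        OF summable_mult[OF summable_inverse_Suc_squared, of "1/x"]])
     (use trigamma_term_nonneg trigamma_term_le in auto)

lemma trigamma_series_bounds:
  assumes "x \<ge> 1"
  shows "0 \<le> trigamma_series x \<and> trigamma_series x \<le> 1 / x * (\<Sum>m. 1 / (real (Suc m))\<^sup>2)"
  unfolding trigamma_series_def suminf_mult[OF summable_inverse_Suc_squared, symmetric]
  using assms trigamma_term_nonneg trigamma_term_le summable_trigamma_term[OF assms]
        summable_mult[OF summable_inverse_Suc_squared, of "1/x"]
  by (auto intro!: suminf_nonneg suminf_le)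

lemma trigamma_term_diff:
  assumes "x > 0"
  shows "trigamma_term x m - trigamma_term (x + 1) m = fact m / pochhammer x (m + 2)"
proof -
  define p where "p = pochhammer x (Suc m)"
  have p: "p > 0" unfolding p_def using pochhammer_pos assms by blast
  have shift: "pochhammer (x + 1) (Suc m) = p * (x + real (Suc m)) / x"
    using pochhammer_rec[of x "Suc m"] pochhammer_Suc[of x "Suc m"] assms
    unfolding p_def by (simp add: field_simps)
  have longer: "pochhammer x (m + 2) = p * (x + real (Suc m))"
    unfolding p_def by (simp add: pochhammer_Suc)
  have "f / (c * p) - f / (c * (p * (x + c) / x)) = f / (p * (x + c))"
    if "c > 0" for c f :: real
    using that p assms by (simp add: divide_simps) (simp add: algebra_simps)
  then show ?thesis
    unfolding trigamma_term_def shift longer p_def[symmetric] by simp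
qed

text \<open>The differences sum to 1/x^2: they telescope with  d m = m! / (x x^{(m+1)}) .\<close>
lemma sums_fact_over_pochhammer:
  fixes x :: real
  assumes x: "x \<ge> 1"
  shows "(\<lambda>m. fact m / pochhammer x (m + 2)) sums (1 / x\<^sup>2)"
proof -
  define d where "d m = fact m / (x * pochhammer x (Suc m))" for m
  have pos: "pochhammer x n > 0" for n by (rule pochhammer_pos) (use x in simp)
  have step: "d m - d (Suc m) = fact m / pochhammer x (m + 2)" for m
  proof -
    have longer: "pochhammer x (Suc (Suc m)) = pochhammer x (Suc m) * (x + real (Suc m))"
      by (simp add: pochhammer_Suc)
    have "f / (x * p) - c * f / (x * (p * (x + c))) = f / (p * (x + c))"
      if "c > 0" "p > 0" for c f p :: real
      using that x by (simp add: divide_simps) (simp add: algebra_simps)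
    then show ?thesis
      unfolding d_def fact_Suc[of m] using pos[of "Suc m"]
      by (simp add: numeral_2_eq_2 longer del: of_nat_Suc)
  qed
  have "d m \<le> inverse (real (Suc m))" for m
  proof -
    have "d m \<le> fact m / (x * (x * fact (Suc m)))"
      unfolding d_def using pochhammer_ge_mult_fact[OF x, of m] pos[of "Suc m"] x
      by (intro divide_left_mono mult_left_mono mult_pos_pos) auto
    also have "\<dots> \<le> fact m / fact (Suc m)"
      using x by (intro divide_left_mono) (auto simp: mult_ge1_I)
    also have "\<dots> = inverse (real (Suc m))" by (simp add: divide_simps)
    finally show ?thesis .
  qed
  moreover have "0 \<le> d m" for m unfolding d_def using pos[of "Suc m"] x by simp
  ultimately have "d \<longlonglongrightarrow> 0"
    by (intro tendsto_sandwich[OF _ _ tendsto_const LIMSEQ_inverse_real_of_nat]) auto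
  from telescope_sums'[OF this] show ?thesis
    using step x by (simp add: d_def power2_eq_square)
qed

lemma trigamma_series_step:
  assumes "x \<ge> 1"
  shows "trigamma_series x - trigamma_series (x + 1) = 1 / x\<^sup>2"
proof -
  have "(\<lambda>m. trigamma_term x m - trigamma_term (x + 1) m)
          sums (trigamma_series x - trigamma_series (x + 1))"
    unfolding trigamma_series_def using assms
    by (intro sums_diff summable_sums summable_trigamma_term) auto
  moreover have "(\<lambda>m. trigamma_term x m - trigamma_term (x + 1) m) sums (1 / x\<^sup>2)"
    using sums_fact_over_pochhammer[OF assms] trigamma_term_diff assms by simp
  ultimately show ?thesis by (rule sums_unique2)
qed

text \<open>The series is the trigamma function: it satisfies the same difference
  equation and vanishes at infinity, so it equals  \<Sum>n. 1/(x+n)^2 .\<close>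
theorem trigamma_series_eq_Polygamma:
  assumes x: "x \<ge> 1"
  shows "trigamma_series x = Polygamma 1 x"
proof -
  define C where "C = (\<Sum>m. 1 / (real (Suc m))\<^sup>2)"
  have shift_at_top: "filterlim (\<lambda>n. x + real n) at_top sequentially"
    by (rule filterlim_tendsto_add_at_top[OF tendsto_const filterlim_real_sequentially])
  have "(\<lambda>n. C / (x + real n)) \<longlonglongrightarrow> 0"
    by (rule tendsto_divide_0[OF tendsto_const filterlim_at_top_imp_at_infinity[OF shift_at_top]])
  then have majorant: "(\<lambda>n. 1 / (x + real n) * C) \<longlonglongrightarrow> 0" by simp
  have bounds: "0 \<le> trigamma_series (x + real n) \<and>
                  trigamma_series (x + real n) \<le> 1 / (x + real n) * C" for n
    unfolding C_def using x by (intro trigamma_series_bounds) simp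
  have "(\<lambda>n. trigamma_series (x + real n)) \<longlonglongrightarrow> 0"
    by (rule tendsto_sandwich[OF _ _ tendsto_const majorant])
       (use bounds in \<open>auto intro: always_eventually\<close>)
  from telescope_sums'[OF this]
  have "(\<lambda>n. trigamma_series (x + real n) - trigamma_series (x + real (Suc n)))
          sums trigamma_series x" by simp
  moreover have "trigamma_series (x + real n) - trigamma_series (x + real (Suc n))
                   = inverse ((x + real n) ^ Suc 1)" for n
    using trigamma_series_step[of "x + real n"] x
    by (simp add: add.assoc add.commute[of 1] inverse_eq_divide power2_eq_square)
  ultimately have "(\<lambda>n. inverse ((x + real n) ^ Suc 1)) sums trigamma_series x"
    by simp
  moreover have "(\<lambda>n. inverse ((x + real n) ^ Suc 1)) sums Polygamma 1 x"
    using Polygamma_LIMSEQ[of x 1] x by simp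
  ultimately show ?thesis by (rule sums_unique2)
qed

definition integrand :: "real \<Rightarrow> real" where
  "integrand t = (\<Sum>k. 1 / ((real (k + 2))\<^sup>2 * gbinom (t + real (k + 2)) (real (k + 2))))"

lemma gbinom_eq_pochhammer:
  assumes "(t::real) \<ge> 0"
  shows "gbinom (t + real n) (real n) = pochhammer (t + 1) n / fact n"
proof -
  have nz: "t + 1 \<notin> \<int>\<^sub>\<le>\<^sub>0" using assms nonpos_Ints_nonpos by fastforce
  then have "Gamma (t + 1) \<noteq> 0" by (simp add: Gamma_eq_zero_iff)
  moreover have "Gamma (t + real n + 1) = pochhammer (t + 1) n * Gamma (t + 1)"
    using pochhammer_Gamma[OF nz, of n] \<open>Gamma (t + 1) \<noteq> 0\<close> by (simp add: field_simps add_ac)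
  moreover have "Gamma (real n + 1) = fact n"
    using Gamma_fact[of n, where 'a=real] by (simp add: add_ac)
  ultimately show ?thesis unfolding gbinom_def by simp
qed

lemma integrand_summand_eq:
  assumes "(t::real) \<ge> 0"
  shows "1 / ((real (k + 2))\<^sup>2 * gbinom (t + real (k + 2)) (real (k + 2)))
           = trigamma_term (t + 1) (Suc k)"
  using pochhammer_pos[of "t + 1" "k + 2"] assms
  unfolding gbinom_eq_pochhammer[OF assms] trigamma_term_def
  by (simp add: numeral_2_eq_2 power2_eq_square)

text \<open>The integrand is the (nonnegative) tail of the series at t+1 after its first term 1/(t+1).\<close>
lemma integrand_eq:
  assumes t: "(t::real) \<ge> 0"
  shows "integrand t = Polygamma 1 (t + 1) - 1 / (t + 1)" and "0 \<le> integrand t"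
proof -
  have s: "summable (trigamma_term (t + 1))" using t by (intro summable_trigamma_term) simp
  have tail: "integrand t = (\<Sum>k. trigamma_term (t + 1) (Suc k))"
    unfolding integrand_def using integrand_summand_eq[OF t] by simp
  also have "\<dots> = trigamma_series (t + 1) - trigamma_term (t + 1) 0"
    unfolding trigamma_series_def by (rule suminf_split_head[OF s])
  finally show "integrand t = Polygamma 1 (t + 1) - 1 / (t + 1)"
    using trigamma_series_eq_Polygamma[of "t + 1"] t by (simp add: trigamma_term_def)
  show "0 \<le> integrand t"
    unfolding tail using s t trigamma_term_nonneg[of "t + 1"]
    by (intro suminf_nonneg) (auto simp: summable_Suc_iff)
qed

lemma antiderivative_integrand:
  assumes "(t::real) \<ge> 0"
  shows "((\<lambda>t. Digamma (t + 1) - ln (t + 1)) has_real_derivative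
            (Polygamma 1 (t + 1) - 1 / (t + 1))) (at t within S)"
proof -
  have "t + 1 \<notin> \<int>\<^sub>\<le>\<^sub>0" using assms nonpos_Ints_nonpos by fastforce
  then have "(Digamma has_real_derivative Polygamma 1 (t + 1)) (at (t + 1))"
    using has_field_derivative_Polygamma[of "t + 1" 0 UNIV] by simp
  then have "((\<lambda>t. Digamma (t + 1)) has_real_derivative Polygamma 1 (t + 1) * 1) (at t within S)"
    by (rule DERIV_chain2) (auto intro!: derivative_eq_intros)
  then show ?thesis using assms by (auto intro!: derivative_eq_intros)
qed

text \<open>Integral over [0,N], using \<psi>(N+1) = H_N - \<gamma> and \<psi>(1) = -\<gamma>.\<close>
lemma integrand_has_integral_segment:
  "(integrand has_integral (harm N - ln (real N + 1))) {0..real N}"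
proof -
  have "((\<lambda>t. Polygamma 1 (t + 1) - 1 / (t + 1)) has_integral
          ((Digamma (real N + 1) - ln (real N + 1)) - (Digamma (0 + 1) - ln (0 + 1)))) {0..real N}"
  proof (rule fundamental_theorem_of_calculus)
    show "((\<lambda>t. Digamma (t + 1) - ln (t + 1)) has_vector_derivative
            (Polygamma 1 (t + 1) - 1 / (t + 1))) (at t within {0..real N})"
      if "t \<in> {0..real N}" for t
      unfolding has_real_derivative_iff_has_vector_derivative[symmetric]
      using that by (intro antiderivative_integrand) auto
  qed simp
  moreover have "Digamma (real N + 1) = harm N - euler_mascheroni"
    using Digamma_of_nat[of N, where 'a=real] by (simp add: add_ac)
  ultimately show ?thesis
    by (subst has_integral_cong[of _ _ "\<lambda>t. Polygamma 1 (t + 1) - 1 / (t + 1)"])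
       (auto simp: integrand_eq)
qed

lemma harm_minus_ln_Suc_LIMSEQ: "(\<lambda>N. harm N - ln (real N + 1)) \<longlonglongrightarrow> euler_mascheroni"
proof -
  have "(\<lambda>N. (harm (Suc N) - ln (real (Suc N))) - inverse (real (Suc N)))
          \<longlonglongrightarrow> euler_mascheroni - 0"
    by (intro tendsto_diff LIMSEQ_Suc[OF euler_mascheroni_LIMSEQ] LIMSEQ_inverse_real_of_nat)
  then show ?thesis by (simp add: harm_Suc add_ac)
qed

section \<open>Improper integrals of nonnegative functions\<close>

lemma has_integral_nonneg_from_segments:
  fixes f :: "real \<Rightarrow> real"
  assumes nonneg: "\<And>t. t \<ge> 0 \<Longrightarrow> 0 \<le> f t"
    and segment: "\<And>N. (f has_integral I N) {0..real N}"
    and lim: "I \<longlonglongrightarrow> L"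
  shows "(f has_integral L) {0..}"
proof -
  define f_cut where "f_cut N t = (if t \<in> {0..real N} then f t else 0)" for N :: nat and t
  show ?thesis
  proof (rule has_integral_monotone_convergence_increasing[where f=f_cut, OF _ _ _ lim])
    show "(f_cut N has_integral I N) {0..}" for N
      unfolding f_cut_def using segment by (subst has_integral_restrict) auto
    show "f_cut N t \<le> f_cut (Suc N) t" if "t \<in> {0..}" for N t
      unfolding f_cut_def using nonneg that by auto
    show "(\<lambda>N. f_cut N t) \<longlonglongrightarrow> f t" if "t \<in> {0..}" for t
    proof (rule tendsto_eventually)
      show "\<forall>\<^sub>F N in sequentially. f_cut N t = f t"
        using eventually_ge_at_top[of "nat \<lceil>t\<rceil>"]
        by eventually_elim (use that in \<open>auto simp: f_cut_def nat_le_iff ceiling_le_iff\<close>)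
    qed
  qed
qed

theorem proposition2:
  shows "((\<lambda>t::real. \<Sum>k. 1 / ((real (k + 2))\<^sup>2 * gbinom (t + real (k + 2)) (real (k + 2))))
           has_integral euler_mascheroni) {0..}"
  using has_integral_nonneg_from_segments[OF integrand_eq(2)
          integrand_has_integral_segment harm_minus_ln_Suc_LIMSEQ]
  unfolding integrand_def .

end
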